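(* Let $X$ have the standard Cauchy distribution. Then the distribution function $F(x)=\frac{2}{\pi}\arctan(x)$, $x\ge0$, of $|X|$ satisfies $F\in\mathcal{S}_C$ but $F\notin\mathcal{S}_F$.
   Context: For a distribution function $G$, $G^{-1}(u)=\inf\{x\in\mathbb{R}:G(x)\ge u\}$ for $0<u<1$. For distribution functions $F,G$, write $F\le_{skew}G$ if the function $x\mapsto G^{-1}(F(x))$ is convex (on the set of $x$ with $0<F(x)<1$). For a distribution function $F$, $\mathcal{S}(F)=\{G: F\le_{skew}G\}$. Set $\mathcal{S}_F=\mathcal{S}(F_F)$ with $F_F(x)=e^{-1/x}$, $x>0$ (standard Fréchet), and $\mathcal{S}_C=\mathcal{S}(F_C)$ with $F_C(x)=\frac1\pi\arctan(x)+\frac12$, $x\in\mathbb{R}$ (Cauchy). *)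

theory Defs
  imports "HOL-Analysis.Analysis"
begin

definition is_distr_fun :: "(real \<Rightarrow> real) \<Rightarrow> bool" where
  "is_distr_fun G \<longleftrightarrow> mono G \<and> (\<forall>x. continuous (at_right x) G)
     \<and> (G \<longlongrightarrow> 0) at_bot \<and> (G \<longlongrightarrow> 1) at_top"

definition quantile :: "(real \<Rightarrow> real) \<Rightarrow> real \<Rightarrow> real" where
  "quantile G u = Inf {x. u \<le> G x}"

definition skew_le :: "(real \<Rightarrow> real) \<Rightarrow> (real \<Rightarrow> real) \<Rightarrow> bool" where
  "skew_le F G \<longleftrightarrow> convex_on {x. 0 < F x \<and> F x < 1} (\<lambda>x. quantile G (F x))"

definition skew_class :: "(real \<Rightarrow> real) \<Rightarrow> (real \<Rightarrow> real) set" where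
  "skew_class F = {G. is_distr_fun G \<and> skew_le F G}"

definition frechet_cdf :: "real \<Rightarrow> real" where
  "frechet_cdf x = (if x > 0 then exp (- 1 / x) else 0)"

definition cauchy_cdf :: "real \<Rightarrow> real" where
  "cauchy_cdf x = arctan x / pi + 1 / 2"

definition S_F :: "(real \<Rightarrow> real) set" where
  "S_F = skew_class frechet_cdf"

definition S_C :: "(real \<Rightarrow> real) set" where
  "S_C = skew_class cauchy_cdf"

definition abs_cauchy_cdf :: "real \<Rightarrow> real" where
  "abs_cauchy_cdf x = (if x \<ge> 0 then 2 / pi * arctan x else 0)"

end

theory Submission
  imports Defs "HOL-Real_Asymp.Real_Asymp"
begin

text \<open>The quantile function of \<open>|X|\<close> is \<open>u \<mapsto> tan (\<pi> u / 2)\<close>. Composed with the Cauchy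
  distribution function it becomes \<open>x \<mapsto> x + sqrt (1 + x\<^sup>2)\<close>, the Euclidean norm of \<open>(1, x)\<close>
  plus a linear term, hence convex. Composed with the Frechet distribution function it becomes
  \<open>g x = tan (\<pi>/2 \<cdot> exp (-1/x))\<close> on \<open>x > 0\<close>, with \<open>g \<rightarrow> 0\<close> at \<open>0\<^sup>+\<close>. A convex function on
  \<open>(0, \<infinity>)\<close> vanishing at \<open>0\<^sup>+\<close> has nondecreasing ratio \<open>f x / x\<close>, so \<open>g\<close> lies below
  its asymptotic slope line \<open>2x/\<pi>\<close>; but \<open>g x - 2x/\<pi> \<rightarrow> 1/\<pi> > 0\<close>.\<close>

lemma convex_on_cong:
  assumes "\<And>x. x \<in> S \<Longrightarrow> f x = g x"
  shows "convex_on S f \<longleftrightarrow> convex_on S g"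
  using assms unfolding convex_on_def convex_def by auto

lemma convex_on_ratio_mono:
  fixes f :: "real \<Rightarrow> real"
  assumes f: "convex_on {0<..} f" and f0: "(f \<longlongrightarrow> 0) (at_right 0)"
    and "0 < b" "b < z"
  shows "f b / b \<le> f z / z"
proof -
  have lim_b: "((\<lambda>a. (f a - f b) / (a - b)) \<longlongrightarrow> (0 - f b) / (0 - b)) (at_right 0)"
    using \<open>0 < b\<close> by (intro tendsto_intros f0) auto
  have lim_z: "((\<lambda>a. (f a - f z) / (a - z)) \<longlongrightarrow> (0 - f z) / (0 - z)) (at_right 0)"
    using \<open>0 < b\<close> \<open>b < z\<close> by (intro tendsto_intros f0) auto
  have "\<forall>\<^sub>F a in at_right 0. (f a - f b) / (a - b) \<le> (f a - f z) / (a - z)"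
  proof -
    have "\<forall>\<^sub>F a in at_right 0. 0 < a \<and> a < b"
      using \<open>0 < b\<close> by (simp add: eventually_at_right_field) metis
    then show ?thesis
      by eventually_elim (use f \<open>b < z\<close> in \<open>auto intro: convex_on_slope_le\<close>)
  qed
  then have "(0 - f b) / (0 - b) \<le> (0 - f z) / (0 - z)"
    by (rule tendsto_le[OF trivial_limit_at_right_real lim_z lim_b])
  then show ?thesis by simp
qed

lemma convex_on_le_asymptotic_slope:
  fixes f :: "real \<Rightarrow> real"
  assumes f: "convex_on {0<..} f" and f0: "(f \<longlongrightarrow> 0) (at_right 0)"
    and slope: "((\<lambda>z. f z / z) \<longlongrightarrow> L) at_top" and "0 < x"
  shows "f x \<le> L * x"
proof -
  have "\<forall>\<^sub>F z in at_top. f x / x \<le> f z / z"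
    using eventually_gt_at_top[of x]
    by eventually_elim (use convex_on_ratio_mono[OF f f0 \<open>0 < x\<close>] in auto)
  with slope have "f x / x \<le> L" by (intro tendsto_lowerbound) auto
  with \<open>0 < x\<close> show ?thesis by (simp add: divide_le_eq mult.commute)
qed

lemma convex_on_plus_sqrt_one_plus_square: "convex_on UNIV (\<lambda>x::real. x + sqrt (1 + x\<^sup>2))"
proof -
  have "convex_on UNIV (\<lambda>x::real. norm ((1::real), x))"
  proof (rule convex_onI)
    fix t x y :: real assume t: "0 < t" "t < 1"
    have "norm ((1::real), (1 - t) *\<^sub>R x + t *\<^sub>R y)
        = norm ((1 - t) *\<^sub>R ((1::real), x) + t *\<^sub>R (1, y))"
      by simp
    also have "\<dots> \<le> norm ((1 - t) *\<^sub>R ((1::real), x)) + norm (t *\<^sub>R ((1::real), y))"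
      by (rule norm_triangle_ineq)
    also have "\<dots> = (1 - t) * norm ((1::real), x) + t * norm ((1::real), y)"
      by (simp only: norm_scaleR) (use t in simp)
    finally show "norm ((1::real), (1 - t) *\<^sub>R x + t *\<^sub>R y)
        \<le> (1 - t) * norm ((1::real), x) + t * norm ((1::real), y)" .
  qed auto
  then have "convex_on UNIV (\<lambda>x::real. x + norm ((1::real), x))"
    by (intro convex_on_add) (auto simp: convex_on_ident)
  then show ?thesis by (simp add: norm_Pair)
qed

lemma tan_half_arctan_plus_quarter_pi: "tan (arctan x / 2 + pi / 4) = x + sqrt (1 + x\<^sup>2)"
proof -
  define s where "s = sqrt (1 + x\<^sup>2)"
  have "\<bar>x\<bar> < s"
    unfolding s_def by (metis real_sqrt_abs real_sqrt_less_mono less_add_one add.commute)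
  have "tan (arctan x / 2 + pi / 4) = sin (arctan x + pi / 2) / (cos (arctan x + pi / 2) + 1)"
    by (subst tan_half) (simp add: algebra_simps)
  also have "\<dots> = (1 / s) / (1 - x / s)"
    by (simp add: sin_add cos_add cos_arctan sin_arctan s_def)
  also have "\<dots> = 1 / (s - x)"
    using \<open>\<bar>x\<bar> < s\<close> by (simp add: field_simps)
  also have "\<dots> = x + s"
  proof -
    have "(x + s) * (s - x) = 1"
      by (simp add: s_def algebra_simps power2_eq_square[symmetric])
    with \<open>\<bar>x\<bar> < s\<close> show ?thesis by (simp add: divide_eq_eq)
  qed
  finally show ?thesis by (simp add: s_def)
qed

lemma abs_cauchy_cdf_eq: "abs_cauchy_cdf x = 2 / pi * arctan (max x 0)"
  by (simp add: abs_cauchy_cdf_def max_def)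

lemma is_distr_fun_abs_cauchy_cdf: "is_distr_fun abs_cauchy_cdf"
proof -
  have "mono abs_cauchy_cdf"
    by (intro monoI) (simp add: abs_cauchy_cdf_eq arctan_monotone' divide_right_mono)
  moreover have "continuous (at_right x) abs_cauchy_cdf" for x
    unfolding abs_cauchy_cdf_eq[abs_def] by (intro continuous_intros)
  moreover have "(abs_cauchy_cdf \<longlongrightarrow> 0) at_bot"
    by (rule tendsto_eventually, use eventually_le_at_bot[of 0] in eventually_elim)
       (simp add: abs_cauchy_cdf_def)
  moreover have "(abs_cauchy_cdf \<longlongrightarrow> 1) at_top"
  proof (rule Lim_transform_eventually)
    show "((\<lambda>x. 2 / pi * arctan x) \<longlongrightarrow> 1) at_top" by real_asymp
    show "\<forall>\<^sub>F x in at_top. 2 / pi * arctan x = abs_cauchy_cdf x"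
      using eventually_ge_at_top[of 0] by eventually_elim (simp add: abs_cauchy_cdf_def)
  qed
  ultimately show ?thesis by (simp add: is_distr_fun_def)
qed

lemma quantile_abs_cauchy_cdf:
  assumes "0 < u" "u < 1"
  shows "quantile abs_cauchy_cdf u = tan (pi * u / 2)"
proof -
  let ?t = "tan (pi * u / 2)"
  have angle: "0 < pi * u / 2" "pi * u / 2 < pi / 2" using assms by auto
  then have "0 < ?t" by (rule tan_gt_zero)
  have arctan_t: "arctan ?t = pi * u / 2"
    using angle pi_gt_zero by (intro arctan_tan) linarith+
  have "u \<le> abs_cauchy_cdf y \<longleftrightarrow> ?t \<le> y" for y
  proof -
    have "u \<le> abs_cauchy_cdf y \<longleftrightarrow> arctan ?t \<le> arctan (max y 0)"
      by (simp add: abs_cauchy_cdf_eq arctan_t field_simps)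
    also have "\<dots> \<longleftrightarrow> ?t \<le> y" using \<open>0 < ?t\<close> by (auto simp: arctan_le_iff)
    finally show ?thesis .
  qed
  then have "{y. u \<le> abs_cauchy_cdf y} = {?t..}" by auto
  then show ?thesis by (simp add: quantile_def)
qed

lemma abs_cauchy_cdf_in_S_C: "abs_cauchy_cdf \<in> S_C"
proof -
  have bounds: "0 < cauchy_cdf x \<and> cauchy_cdf x < 1" for x
    using arctan_bounded[of x] by (auto simp: cauchy_cdf_def field_simps)
  have "quantile abs_cauchy_cdf (cauchy_cdf x) = x + sqrt (1 + x\<^sup>2)" for x
  proof -
    have "quantile abs_cauchy_cdf (cauchy_cdf x) = tan (pi * cauchy_cdf x / 2)"
      using bounds by (simp add: quantile_abs_cauchy_cdf)
    also have "pi * cauchy_cdf x / 2 = arctan x / 2 + pi / 4"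
      by (simp add: cauchy_cdf_def field_simps)
    finally show ?thesis by (simp only: tan_half_arctan_plus_quarter_pi)
  qed
  then show ?thesis
    using bounds convex_on_plus_sqrt_one_plus_square is_distr_fun_abs_cauchy_cdf
    by (simp add: S_C_def skew_class_def skew_le_def)
qed

lemma abs_cauchy_cdf_notin_S_F: "abs_cauchy_cdf \<notin> S_F"
proof
  define g where "g x = tan (pi / 2 * exp (- 1 / x))" for x
  have "g x = quantile abs_cauchy_cdf (frechet_cdf x)" if "0 < x" for x
    using that by (simp add: g_def frechet_cdf_def quantile_abs_cauchy_cdf mult.commute)
  then have "convex_on {0<..} g \<longleftrightarrow>
      convex_on {0<..} (\<lambda>x. quantile abs_cauchy_cdf (frechet_cdf x))"
    by (intro convex_on_cong) simp
  moreover have "{x. 0 < frechet_cdf x \<and> frechet_cdf x < 1} = {0<..}"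
    by (auto simp: frechet_cdf_def)
  moreover assume "abs_cauchy_cdf \<in> S_F"
  ultimately have "convex_on {0<..} g"
    by (simp add: S_F_def skew_class_def skew_le_def)
  moreover have "(g \<longlongrightarrow> 0) (at_right 0)" unfolding g_def by real_asymp
  moreover have "((\<lambda>z. g z / z) \<longlongrightarrow> 2 / pi) at_top" unfolding g_def by real_asymp
  ultimately have below: "g x \<le> 2 / pi * x" if "0 < x" for x
    using convex_on_le_asymptotic_slope that by blast
  have "((\<lambda>x. g x - 2 / pi * x) \<longlongrightarrow> 1 / pi) at_top" unfolding g_def by real_asymp
  moreover have "\<forall>\<^sub>F x in at_top. g x - 2 / pi * x \<le> 0"
    using eventually_gt_at_top[of 0] by eventually_elim (metis below diff_le_0_iff_le)
  ultimately have "1 / pi \<le> 0" by (rule tendsto_upperbound) simp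
  then show False by (metis divide_pos_pos not_le pi_gt_zero zero_less_one)
qed

theorem mainTheorem8:
  shows "abs_cauchy_cdf \<in> S_C \<and> abs_cauchy_cdf \<notin> S_F"
  using abs_cauchy_cdf_in_S_C abs_cauchy_cdf_notin_S_F by blast

end
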